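(* Let $\alpha$ be a unit speed Frenet curve in $\mathbb{E}^3$ with curvature $\kappa>0$ and torsion $\tau$, and let $\beta$ be an osculating mate of $\alpha$ with curvature $\bar\kappa$ and torsion $\bar\tau$. Then $$\kappa=\frac{\varepsilon_1\bar\kappa^2}{\bar\kappa^2+\bar\tau^2}\left(\frac{\bar\tau}{\bar\kappa}\right)',\qquad \tau=\pm\sqrt{\bar\kappa^2+\bar\tau^2}.$$
   Context: $\alpha:I\to\mathbb{E}^3$ is parametrized by arclength $s$, with Frenet frame $\{T,N,B\}$, $T'=\kappa N$, $N'=-\kappa T+\tau B$, $B'=-\tau N$. An osculating mate of $\alpha$ is a curve $\beta(s)=\int(x_1T+x_2N)ds$ with smooth $x_1,x_2$, $x_1^2+x_2^2=1$ and $\beta''\perp\mathrm{span}\{T,N\}$; $\beta$ is assumed to be a Frenet curve (nonvanishing curvature), unit speed in $s$, with Frenet apparatus $\{\bar T,\bar N,\bar B,\bar\kappa,\bar\tau\}$. Then $\beta'=\sin\theta\,T+\cos\theta\,N$ for an antiderivative $\theta=\int\kappa ds$ of $\kappa$, and $\varepsilon_1\in\{\pm1\}$ denotes the sign with $\varepsilon_1\tau\cos\theta>0$. The prime denotes $d/ds$. *)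

theory Defs
  imports "HOL-Analysis.Analysis" "HOL-Analysis.Cross3"
begin

definition frenet_apparatus ::
  "real set \<Rightarrow> (real \<Rightarrow> real^3) \<Rightarrow> (real \<Rightarrow> real^3) \<Rightarrow> (real \<Rightarrow> real^3) \<Rightarrow> (real \<Rightarrow> real^3)
    \<Rightarrow> (real \<Rightarrow> real) \<Rightarrow> (real \<Rightarrow> real) \<Rightarrow> bool" where
  "frenet_apparatus I \<gamma> T N B \<kappa> \<tau> \<longleftrightarrow>
     (\<forall>s\<in>I.
        (\<gamma> has_vector_derivative T s) (at s) \<and>
        (T has_vector_derivative (\<kappa> s *\<^sub>R N s)) (at s) \<and>
        (N has_vector_derivative (- \<kappa> s *\<^sub>R T s + \<tau> s *\<^sub>R B s)) (at s) \<and>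
        (B has_vector_derivative (- \<tau> s *\<^sub>R N s)) (at s) \<and>
        norm (T s) = 1 \<and> norm (N s) = 1 \<and> inner (T s) (N s) = 0 \<and>
        B s = cross3 (T s) (N s) \<and>
        \<kappa> s > 0)"

end

(* Differentiating beta' = sin theta T + cos theta N with theta' = kappa cancels the T and N
   components and leaves kappab Nb = tau cos theta B.  Hence kappab = eps tau cos theta,
   Nb = eps B and Bb = eps (cos theta T - sin theta N).  Since eps = Nb . B is differentiable
   and takes only the values 1 and -1, its derivative vanishes, so the Frenet equation for Nb
   gives taub = tau sin theta.  Thus kappab^2 + taub^2 = tau^2, and taub / kappab = eps tan theta
   has derivative eps kappa / cos^2 theta, which is the formula for kappa. *)
theory Submission
  imports Defs
begin

unbundle cross3_syntax

lemma frenet_apparatusD: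
  assumes "frenet_apparatus I \<gamma> T N B \<kappa> \<tau>" "s \<in> I"
  shows "(\<gamma> has_vector_derivative T s) (at s)"
    "(T has_vector_derivative (\<kappa> s *\<^sub>R N s)) (at s)"
    "(N has_vector_derivative (- \<kappa> s *\<^sub>R T s + \<tau> s *\<^sub>R B s)) (at s)"
    "(B has_vector_derivative (- \<tau> s *\<^sub>R N s)) (at s)"
    "norm (T s) = 1" "norm (N s) = 1" "T s \<bullet> N s = 0" "B s = T s \<times> N s" "\<kappa> s > 0"
  using assms unfolding frenet_apparatus_def by auto

lemma cross3_orthonormal:
  fixes T N :: "real^3"
  assumes "norm T = 1" "norm N = 1" "T \<bullet> N = 0"
  shows "T \<times> (T \<times> N) = - N" "N \<times> (T \<times> N) = T" "norm (T \<times> N) = 1"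
proof -
  have "T \<bullet> T = 1" "N \<bullet> N = 1" "N \<bullet> T = 0"
    using assms by (simp_all add: dot_square_norm inner_commute)
  then show "T \<times> (T \<times> N) = - N" "N \<times> (T \<times> N) = T"
    using assms(3) by (simp_all add: Lagrange inner_commute)
  show "norm (T \<times> N) = 1"
    using norm_cross_dot[of T N] norm_ge_zero[of "T \<times> N"] assms by (auto simp: power2_eq_1_iff)
qed

lemma has_real_derivative_inner:
  assumes "(f has_vector_derivative f') (at x)" "(g has_vector_derivative g') (at x)"
  shows "((\<lambda>u. f u \<bullet> g u) has_real_derivative (f x \<bullet> g' + f' \<bullet> g x)) (at x)"
  unfolding has_field_derivative_def
  using has_derivative_inner[OF assms[unfolded has_vector_derivative_def]]
  by (rule has_derivative_eq_rhs) (simp add: fun_eq_iff algebra_simps)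

lemma has_real_derivative_zero_if_square_one:
  assumes "(f has_real_derivative D) (at x)" "open S" "x \<in> S" "\<And>u. u \<in> S \<Longrightarrow> (f u)\<^sup>2 = 1"
  shows "D = 0"
proof -
  have "((\<lambda>u. (f u)\<^sup>2) has_real_derivative 2 * f x * D) (at x)"
    using DERIV_power[OF assms(1), of 2] by (simp add: mult_ac)
  moreover have "((\<lambda>u. (f u)\<^sup>2) has_real_derivative 0) (at x)"
    by (rule has_field_derivative_transform_within_open[OF DERIV_const assms(2,3)]) (simp add: assms(4))
  ultimately have "2 * f x * D = 0" by (rule DERIV_unique)
  moreover have "f x \<noteq> 0" using assms(3,4) by fastforce
  ultimately show "D = 0" by simp
qed

lemma rotated_frame_has_vector_derivative:
  assumes "frenet_apparatus I \<gamma> T N B \<kappa> \<tau>" "s \<in> I" "(\<theta> has_real_derivative \<kappa> s) (at s)"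
  shows "((\<lambda>u. sin (\<theta> u) *\<^sub>R T u + cos (\<theta> u) *\<^sub>R N u) has_vector_derivative
           (\<tau> s * cos (\<theta> s)) *\<^sub>R B s) (at s)"
proof -
  note frenet = frenet_apparatusD[OF assms(1,2)]
  have "((\<lambda>u. sin (\<theta> u) *\<^sub>R T u + cos (\<theta> u) *\<^sub>R N u) has_vector_derivative
      (sin (\<theta> s) *\<^sub>R (\<kappa> s *\<^sub>R N s) + (cos (\<theta> s) * \<kappa> s) *\<^sub>R T s)
      + (cos (\<theta> s) *\<^sub>R (- \<kappa> s *\<^sub>R T s + \<tau> s *\<^sub>R B s) + (- sin (\<theta> s) * \<kappa> s) *\<^sub>R N s)) (at s)"
    by (intro has_vector_derivative_add has_vector_derivative_scaleR frenet(2,3)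
        DERIV_chain2[OF DERIV_sin assms(3)] DERIV_chain2[OF DERIV_cos assms(3)])
  then show ?thesis by (simp add: algebra_simps)
qed

locale osculating_mate =
  fixes I :: "real set" and \<alpha> T N B \<beta> Tb Nb Bb :: "real \<Rightarrow> real^3"
    and \<kappa> \<tau> \<kappa>b \<tau>b \<theta> :: "real \<Rightarrow> real"
  assumes open_I: "open I"
    and frenet_alpha: "frenet_apparatus I \<alpha> T N B \<kappa> \<tau>"
    and frenet_beta: "frenet_apparatus I \<beta> Tb Nb Bb \<kappa>b \<tau>b"
    and theta: "\<forall>s\<in>I. (\<theta> has_real_derivative \<kappa> s) (at s) \<and>
        (\<beta> has_vector_derivative (sin (\<theta> s) *\<^sub>R T s + cos (\<theta> s) *\<^sub>R N s)) (at s)"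
begin

lemma mate_tangent:
  assumes "s \<in> I"
  shows "Tb s = sin (\<theta> s) *\<^sub>R T s + cos (\<theta> s) *\<^sub>R N s"
proof -
  have "(\<beta> has_vector_derivative (sin (\<theta> s) *\<^sub>R T s + cos (\<theta> s) *\<^sub>R N s)) (at s)"
    using theta assms by blast
  with frenet_apparatusD(1)[OF frenet_beta assms] show ?thesis
    by (rule vector_derivative_unique_at)
qed

lemma mate_curvature_normal:
  assumes "s \<in> I"
  shows "\<kappa>b s *\<^sub>R Nb s = (\<tau> s * cos (\<theta> s)) *\<^sub>R B s"
proof -
  have "(\<theta> has_real_derivative \<kappa> s) (at s)"
    using theta assms by blast
  then have "(Tb has_vector_derivative (\<tau> s * cos (\<theta> s)) *\<^sub>R B s) (at s)"
    by (rule has_vector_derivative_transform_within_open[OF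
          rotated_frame_has_vector_derivative[OF frenet_alpha assms] open_I assms])
      (simp add: mate_tangent)
  with frenet_apparatusD(2)[OF frenet_beta assms] show ?thesis
    by (rule vector_derivative_unique_at)
qed

end

locale signed_osculating_mate = osculating_mate +
  fixes \<epsilon> :: "real \<Rightarrow> real"
  assumes sign: "\<forall>s\<in>I. (\<epsilon> s = 1 \<or> \<epsilon> s = -1) \<and> \<epsilon> s * \<tau> s * cos (\<theta> s) > 0"
begin

lemma sign_square: "s \<in> I \<Longrightarrow> (\<epsilon> s)\<^sup>2 = 1"
  using sign by auto

lemma torsion_cos_nonzero: "s \<in> I \<Longrightarrow> \<tau> s \<noteq> 0 \<and> cos (\<theta> s) \<noteq> 0"
  using sign by force

lemma mate_curvature:
  assumes s: "s \<in> I"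
  shows "\<kappa>b s = \<epsilon> s * \<tau> s * cos (\<theta> s)"
proof -
  have "\<kappa>b s = norm (\<kappa>b s *\<^sub>R Nb s)"
    using frenet_apparatusD(6,9)[OF frenet_beta s] by simp
  also have "\<dots> = \<bar>\<tau> s * cos (\<theta> s)\<bar>"
    using frenet_apparatusD(5-8)[OF frenet_alpha s]
    by (simp add: mate_curvature_normal[OF s] cross3_orthonormal)
  also have "\<dots> = \<epsilon> s * \<tau> s * cos (\<theta> s)"
    using sign s by (auto simp: abs_if)
  finally show ?thesis .
qed

lemma mate_normal:
  assumes s: "s \<in> I"
  shows "Nb s = \<epsilon> s *\<^sub>R B s"
proof -
  have "\<tau> s * cos (\<theta> s) = \<kappa>b s * \<epsilon> s"
    using sign_square[OF s] by (simp add: mate_curvature[OF s] power2_eq_square mult_ac)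
  then have "\<kappa>b s *\<^sub>R Nb s = \<kappa>b s *\<^sub>R (\<epsilon> s *\<^sub>R B s)"
    by (simp add: mate_curvature_normal[OF s])
  then show ?thesis
    using frenet_apparatusD(9)[OF frenet_beta s] by (metis scaleR_cancel_left less_irrefl)
qed

lemma mate_binormal:
  assumes s: "s \<in> I"
  shows "Bb s = \<epsilon> s *\<^sub>R (cos (\<theta> s) *\<^sub>R T s - sin (\<theta> s) *\<^sub>R N s)"
  using frenet_apparatusD(8)[OF frenet_beta s] frenet_apparatusD(5-8)[OF frenet_alpha s]
  by (simp add: mate_tangent[OF s] mate_normal[OF s] cross_add_left cross_mult_left
      cross_mult_right cross3_orthonormal algebra_simps)

text \<open>The sign \<open>\<epsilon>\<close> is only given pointwise; its differentiability comes from \<open>\<epsilon> = Nb \<bullet> B\<close>.\<close>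

lemma sign_has_derivative_zero:
  assumes s: "s \<in> I"
  shows "(\<epsilon> has_real_derivative 0) (at s)"
proof -
  have "((\<lambda>u. Nb u \<bullet> B u) has_real_derivative Nb s \<bullet> (- \<tau> s *\<^sub>R N s) +
           (- \<kappa>b s *\<^sub>R Tb s + \<tau>b s *\<^sub>R Bb s) \<bullet> B s) (at s)"
    by (intro has_real_derivative_inner frenet_apparatusD(3)[OF frenet_beta s]
        frenet_apparatusD(4)[OF frenet_alpha s])
  then have "(\<epsilon> has_real_derivative Nb s \<bullet> (- \<tau> s *\<^sub>R N s) +
           (- \<kappa>b s *\<^sub>R Tb s + \<tau>b s *\<^sub>R Bb s) \<bullet> B s) (at s)"
  proof (rule has_field_derivative_transform_within_open[OF _ open_I s])
    fix u assume "u \<in> I"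
    then show "Nb u \<bullet> B u = \<epsilon> u"
      using frenet_apparatusD(5-8)[OF frenet_alpha \<open>u \<in> I\<close>]
      by (simp add: mate_normal dot_square_norm cross3_orthonormal)
  qed
  then show ?thesis
    by (metis has_real_derivative_zero_if_square_one[where f = \<epsilon>, OF _ open_I s sign_square])
qed

lemma mate_torsion:
  assumes s: "s \<in> I"
  shows "\<tau>b s = \<tau> s * sin (\<theta> s)"
proof -
  have "((\<lambda>u. \<epsilon> u *\<^sub>R B u) has_vector_derivative
      \<epsilon> s *\<^sub>R (- \<tau> s *\<^sub>R N s) + 0 *\<^sub>R B s) (at s)"
    by (intro has_vector_derivative_scaleR sign_has_derivative_zero[OF s]
        frenet_apparatusD(4)[OF frenet_alpha s])
  then have "(Nb has_vector_derivative \<epsilon> s *\<^sub>R (- \<tau> s *\<^sub>R N s) + 0 *\<^sub>R B s) (at s)"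
    by (rule has_vector_derivative_transform_within_open[OF _ open_I s]) (simp add: mate_normal)
  with frenet_apparatusD(3)[OF frenet_beta s]
  have normal_derivative: "- \<kappa>b s *\<^sub>R Tb s + \<tau>b s *\<^sub>R Bb s = - (\<epsilon> s * \<tau> s) *\<^sub>R N s"
    by (simp add: vector_derivative_unique_at)
  have "\<tau>b s = (- \<kappa>b s *\<^sub>R Tb s + \<tau>b s *\<^sub>R Bb s) \<bullet> Bb s"
    using frenet_apparatusD(5-8)[OF frenet_beta s]
    by (simp add: inner_diff_left dot_cross_self dot_square_norm cross3_orthonormal)
  also have "\<dots> = - (\<epsilon> s * \<tau> s) * (N s \<bullet> Bb s)"
    unfolding normal_derivative by simp
  also have "\<dots> = (\<epsilon> s)\<^sup>2 * \<tau> s * sin (\<theta> s)"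
    using frenet_apparatusD(5-7)[OF frenet_alpha s]
    by (simp add: mate_binormal[OF s] inner_diff_right dot_square_norm inner_commute
        power2_eq_square algebra_simps)
  finally show ?thesis
    using sign_square[OF s] by simp
qed

lemma mate_torsion_curvature_ratio_has_derivative:
  assumes s: "s \<in> I"
  shows "((\<lambda>u. \<tau>b u / \<kappa>b u) has_real_derivative \<epsilon> s * \<kappa> s / (cos (\<theta> s))\<^sup>2) (at s)"
proof -
  have "(\<theta> has_real_derivative \<kappa> s) (at s)"
    using theta s by blast
  then have "((\<lambda>u. \<epsilon> u * tan (\<theta> u)) has_real_derivative
      0 * tan (\<theta> s) + inverse ((cos (\<theta> s))\<^sup>2) * \<kappa> s * \<epsilon> s) (at s)"
    using torsion_cos_nonzero[OF s]
    by (intro DERIV_mult sign_has_derivative_zero[OF s] DERIV_chain2[OF DERIV_tan]) auto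
  moreover have "\<epsilon> u * tan (\<theta> u) = \<tau>b u / \<kappa>b u" if "u \<in> I" for u
    using torsion_cos_nonzero[OF that] sign that
    by (auto simp: mate_torsion[OF that] mate_curvature[OF that] tan_def)
  ultimately have "((\<lambda>u. \<tau>b u / \<kappa>b u) has_real_derivative
      0 * tan (\<theta> s) + inverse ((cos (\<theta> s))\<^sup>2) * \<kappa> s * \<epsilon> s) (at s)"
    by (rule has_field_derivative_transform_within_open[OF _ open_I s])
  then show ?thesis
    by (simp add: divide_inverse mult_ac)
qed

end

theorem theorem4:
  fixes a b :: real
    and \<alpha> T N B \<beta> Tb Nb Bb :: "real \<Rightarrow> real^3"
    and \<kappa> \<tau> \<kappa>b \<tau>b x1 x2 \<theta> \<epsilon>1 :: "real \<Rightarrow> real"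
  assumes "a < b"
    and frenet_alpha: "frenet_apparatus {a<..<b} \<alpha> T N B \<kappa> \<tau>"
    and smooth_alpha: "\<forall>s\<in>{a<..<b}. \<kappa> differentiable (at s) \<and> \<tau> differentiable (at s)"
    and mate_deriv: "\<forall>s\<in>{a<..<b}. (\<beta> has_vector_derivative (x1 s *\<^sub>R T s + x2 s *\<^sub>R N s)) (at s)"
    and x_smooth: "\<forall>s\<in>{a<..<b}. x1 differentiable (at s) \<and> x2 differentiable (at s)"
    and x_unit: "\<forall>s\<in>{a<..<b}. (x1 s)\<^sup>2 + (x2 s)\<^sup>2 = 1"
    and osc: "\<forall>s\<in>{a<..<b}.
        inner (vector_derivative (\<lambda>u. x1 u *\<^sub>R T u + x2 u *\<^sub>R N u) (at s)) (T s) = 0 \<and>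
        inner (vector_derivative (\<lambda>u. x1 u *\<^sub>R T u + x2 u *\<^sub>R N u) (at s)) (N s) = 0"
    and frenet_beta: "frenet_apparatus {a<..<b} \<beta> Tb Nb Bb \<kappa>b \<tau>b"
    and smooth_beta: "\<forall>s\<in>{a<..<b}. \<kappa>b differentiable (at s) \<and> \<tau>b differentiable (at s)"
    and theta: "\<forall>s\<in>{a<..<b}. (\<theta> has_real_derivative \<kappa> s) (at s) \<and>
        (\<beta> has_vector_derivative (sin (\<theta> s) *\<^sub>R T s + cos (\<theta> s) *\<^sub>R N s)) (at s)"
    and eps: "\<forall>s\<in>{a<..<b}. (\<epsilon>1 s = 1 \<or> \<epsilon>1 s = -1) \<and> \<epsilon>1 s * \<tau> s * cos (\<theta> s) > 0"
  shows "\<forall>s\<in>{a<..<b}.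
           \<kappa> s = \<epsilon>1 s * (\<kappa>b s)\<^sup>2 / ((\<kappa>b s)\<^sup>2 + (\<tau>b s)\<^sup>2) * deriv (\<lambda>u. \<tau>b u / \<kappa>b u) s \<and>
           (\<tau> s = sqrt ((\<kappa>b s)\<^sup>2 + (\<tau>b s)\<^sup>2) \<or> \<tau> s = - sqrt ((\<kappa>b s)\<^sup>2 + (\<tau>b s)\<^sup>2))"
proof -
  interpret signed_osculating_mate "{a<..<b}" \<alpha> T N B \<beta> Tb Nb Bb \<kappa> \<tau> \<kappa>b \<tau>b \<theta> \<epsilon>1
    using frenet_alpha frenet_beta theta eps by unfold_locales auto
  show ?thesis
  proof
    fix s assume s: "s \<in> {a<..<b}"
    have curvatures: "(\<kappa>b s)\<^sup>2 + (\<tau>b s)\<^sup>2 = (\<tau> s)\<^sup>2"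
    proof -
      have "(\<kappa>b s)\<^sup>2 + (\<tau>b s)\<^sup>2
          = (\<epsilon>1 s)\<^sup>2 * (\<tau> s)\<^sup>2 * (cos (\<theta> s))\<^sup>2 + (\<tau> s)\<^sup>2 * (sin (\<theta> s))\<^sup>2"
        by (simp add: mate_curvature[OF s] mate_torsion[OF s] power_mult_distrib)
      also have "\<dots> = (\<tau> s)\<^sup>2"
        using sign_square[OF s] sin_cos_squared_add[of "\<theta> s"] by algebra
      finally show ?thesis .
    qed
    have "\<kappa> s = \<epsilon>1 s * (\<kappa>b s)\<^sup>2 / ((\<kappa>b s)\<^sup>2 + (\<tau>b s)\<^sup>2) * (\<epsilon>1 s * \<kappa> s / (cos (\<theta> s))\<^sup>2)"
      unfolding curvatures using sign_square[OF s] torsion_cos_nonzero[OF s]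
      by (simp add: mate_curvature[OF s] power_mult_distrib field_simps power2_eq_square)
    moreover have "\<tau> s = sqrt ((\<kappa>b s)\<^sup>2 + (\<tau>b s)\<^sup>2) \<or> \<tau> s = - sqrt ((\<kappa>b s)\<^sup>2 + (\<tau>b s)\<^sup>2)"
      by (simp add: curvatures abs_if)
    ultimately show "\<kappa> s = \<epsilon>1 s * (\<kappa>b s)\<^sup>2 / ((\<kappa>b s)\<^sup>2 + (\<tau>b s)\<^sup>2) * deriv (\<lambda>u. \<tau>b u / \<kappa>b u) s \<and>
           (\<tau> s = sqrt ((\<kappa>b s)\<^sup>2 + (\<tau>b s)\<^sup>2) \<or> \<tau> s = - sqrt ((\<kappa>b s)\<^sup>2 + (\<tau>b s)\<^sup>2))"
      by (simp add: DERIV_imp_deriv[OF mate_torsion_curvature_ratio_has_derivative[OF s]])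
  qed
qed

end
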